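(* Let $J$ be an instance of broadcast scheduling with maximum flow time, let $L^*$ be its optimal maximum flow time, and let $0<\epsilon\le1$ be such that $\epsilon L^*$ is a positive integer. Let $J'$ be the modified instance defined below. Then there exists a schedule $\sigma'$ for $J'$ with maximum flow time at most $(1+2\epsilon)L^*$. Further, any schedule $\sigma'$ for $J'$ can be converted into a feasible schedule $\sigma$ for the original instance $J$ such that $F^\sigma_\rho-F^{\sigma'}_\rho\le 2\epsilon L^*$ for every request $\rho$.
   Context: Broadcast scheduling with maximum flow time: pages $\mathcal{P}$ (unit-sized), requests $\rho$ with integer release time $r_\rho\ge0$ and requested page $p_\rho$. In the original instance $J$ a feasible schedule transmits at most one page at each positive integer time. In a schedule $\sigma$, the completion time $C^\sigma_\rho$ is the first time strictly greater than $r_\rho$ at which $p_\rho$ is transmitted, and the flow time is $F^\sigma_\rho=C^\sigma_\rho-r_\rho$. The modified instance $J'$: each request $\rho$ of $J$ is kept with the same page but its release time is shifted to $\epsilon L^*\lceil r_\rho/(\epsilon L^* )\rceil$; in $J'$ a schedule may transmit pages only at times that are integral multiples of $\epsilon L^*$, and at most $\epsilon L^*$ pages at each such time. Completion and flow times in $J'$ are defined as in $J$ (with respect to the shifted release times); the flow time of $\rho$ in $J$ under $\sigma$ uses the original release time. *)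

theory Defs
  imports Complex_Main
begin

definition served :: "(nat \<Rightarrow> 'p set) \<Rightarrow> ('q \<Rightarrow> nat) \<Rightarrow> ('q \<Rightarrow> 'p) \<Rightarrow> 'q \<Rightarrow> bool" where
  "served S rel pg \<rho> \<longleftrightarrow> (\<exists>t. rel \<rho> < t \<and> pg \<rho> \<in> S t)"

definition serves_all :: "'q set \<Rightarrow> (nat \<Rightarrow> 'p set) \<Rightarrow> ('q \<Rightarrow> nat) \<Rightarrow> ('q \<Rightarrow> 'p) \<Rightarrow> bool" where
  "serves_all R S rel pg \<longleftrightarrow> (\<forall>\<rho>\<in>R. served S rel pg \<rho>)"

definition completion :: "(nat \<Rightarrow> 'p set) \<Rightarrow> ('q \<Rightarrow> nat) \<Rightarrow> ('q \<Rightarrow> 'p) \<Rightarrow> 'q \<Rightarrow> nat" where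
  "completion S rel pg \<rho> = (LEAST t. rel \<rho> < t \<and> pg \<rho> \<in> S t)"

definition flow :: "(nat \<Rightarrow> 'p set) \<Rightarrow> ('q \<Rightarrow> nat) \<Rightarrow> ('q \<Rightarrow> 'p) \<Rightarrow> 'q \<Rightarrow> nat" where
  "flow S rel pg \<rho> = completion S rel pg \<rho> - rel \<rho>"

definition max_flow :: "'q set \<Rightarrow> (nat \<Rightarrow> 'p set) \<Rightarrow> ('q \<Rightarrow> nat) \<Rightarrow> ('q \<Rightarrow> 'p) \<Rightarrow> nat" where
  "max_flow R S rel pg = Max (insert 0 ((\<lambda>\<rho>. flow S rel pg \<rho>) ` R))"

definition feasible :: "(nat \<Rightarrow> 'p set) \<Rightarrow> bool" where
  "feasible S \<longleftrightarrow> S 0 = {} \<and> (\<forall>t. finite (S t) \<and> card (S t) \<le> 1)"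

text \<open>Feasible schedule for the modified instance with granularity D = \<epsilon> L*: transmissions only at
integral multiples of D, at most D pages at each such time.\<close>
definition feasible_mod :: "nat \<Rightarrow> (nat \<Rightarrow> 'p set) \<Rightarrow> bool" where
  "feasible_mod D S \<longleftrightarrow> (\<forall>t. finite (S t) \<and> card (S t) \<le> D \<and> (S t \<noteq> {} \<longrightarrow> D dvd t))"

definition opt_max_flow :: "'q set \<Rightarrow> ('q \<Rightarrow> nat) \<Rightarrow> ('q \<Rightarrow> 'p) \<Rightarrow> nat" where
  "opt_max_flow R rel pg =
     (LEAST L. \<exists>S::nat \<Rightarrow> 'p set. feasible S \<and> serves_all R S rel pg \<and> max_flow R S rel pg = L)"

definition shift_rel :: "nat \<Rightarrow> ('q \<Rightarrow> nat) \<Rightarrow> 'q \<Rightarrow> nat" where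
  "shift_rel D rel \<rho> = D * nat \<lceil>real (rel \<rho>) / real D\<rceil>"

end

theory Submission
  imports Defs
begin

text \<open>Write \<open>D = \<epsilon> L*\<close>; shifting releases up to the next multiple of \<open>D\<close> delays them by less
than \<open>D\<close>. An optimal schedule for \<open>J\<close> becomes a schedule for \<open>J'\<close> by sending, at each multiple
\<open>t\<close> of \<open>D\<close>, the (at most \<open>D\<close>) pages the optimum sends in the window \<open>[t - 2D, t - D)\<close>: every
request is then completed at most \<open>2D\<close> steps later than in the optimum. Conversely, a schedule
for \<open>J'\<close> becomes feasible for \<open>J\<close> by spreading the \<open>\<le> D\<close> pages sent at a multiple \<open>t\<close> of \<open>D\<close>
over the slots \<open>t + 1, \<dots>, t + D\<close>: completion is delayed by at most \<open>D\<close>, and the original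
release time is at most \<open>D\<close> earlier than the shifted one.\<close>

lemma completion_served:
  assumes "served S rel pg \<rho>"
  shows "rel \<rho> < completion S rel pg \<rho> \<and> pg \<rho> \<in> S (completion S rel pg \<rho>)"
  using assms unfolding served_def completion_def by (metis (mono_tags, lifting) LeastI)

lemma completion_le:
  assumes "rel \<rho> < t" "pg \<rho> \<in> S t"
  shows "served S rel pg \<rho> \<and> completion S rel pg \<rho> \<le> t"
  using assms unfolding served_def completion_def by (auto simp: Least_le)

lemma flow_le_max_flow:
  assumes "finite R" "\<rho> \<in> R"
  shows "flow S rel pg \<rho> \<le> max_flow R S rel pg"
  unfolding max_flow_def using assms by (intro Max_ge) auto

lemma max_flow_le:
  assumes "finite R" "\<And>\<rho>. \<rho> \<in> R \<Longrightarrow> flow S rel pg \<rho> \<le> B"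
  shows "max_flow R S rel pg \<le> B"
  unfolding max_flow_def using assms by (subst Max_le_iff) auto

lemma shift_rel_bounds:
  assumes "D > 0"
  shows "rel \<rho> \<le> shift_rel D rel \<rho> \<and> shift_rel D rel \<rho> < rel \<rho> + D"
proof -
  define c where "c = \<lceil>real (rel \<rho>) / real D\<rceil>"
  have "c \<ge> 0"
    unfolding c_def by simp (smt (verit) divide_nonneg_nonneg of_nat_0_le_iff)
  then have shift: "real (shift_rel D rel \<rho>) = real_of_int c * real D"
    unfolding shift_rel_def c_def by simp
  have "real (rel \<rho>) \<le> real_of_int c * real D"
    unfolding c_def using assms by (intro ceiling_divide_upper) simp
  moreover have "(real_of_int c - 1) * real D < real (rel \<rho>)"
    unfolding c_def using assms by (intro ceiling_divide_lower) simp
  ultimately show ?thesis using shift by (simp add: algebra_simps)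
qed

lemma exists_feasible_schedule:
  assumes "finite R"
  shows "\<exists>S::nat \<Rightarrow> 'p set. feasible S \<and> serves_all R S rel (pg :: 'q \<Rightarrow> 'p)"
proof -
  obtain f :: "'q \<Rightarrow> nat" where f: "inj_on f R"
    using assms by (metis finite_imp_inj_to_nat_seg)
  define M where "M = Max (insert 0 (rel ` R))"
  have M: "rel \<rho> \<le> M" if "\<rho> \<in> R" for \<rho>
    unfolding M_def using assms that by (intro Max_ge) auto
  define S where "S t = pg ` {\<rho>\<in>R. f \<rho> + M + 1 = t}" for t
  have "card (S t) \<le> 1" for t
  proof -
    have fin: "finite {\<rho>\<in>R. f \<rho> + M + 1 = t}" using assms by simp
    then have "card {\<rho>\<in>R. f \<rho> + M + 1 = t} \<le> Suc 0"
      using f by (subst card_le_Suc0_iff_eq) (auto dest: inj_onD)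
    moreover have "card (S t) \<le> card {\<rho>\<in>R. f \<rho> + M + 1 = t}"
      unfolding S_def by (rule card_image_le[OF fin])
    ultimately show ?thesis by simp
  qed
  then have "feasible S"
    unfolding feasible_def S_def using assms by auto
  moreover have "rel \<rho> < f \<rho> + M + 1 \<and> pg \<rho> \<in> S (f \<rho> + M + 1)" if "\<rho> \<in> R" for \<rho>
    using M[OF that] that unfolding S_def by auto
  then have "serves_all R S rel pg"
    unfolding serves_all_def served_def by blast
  ultimately show ?thesis by blast
qed

lemma exists_optimal_schedule:
  assumes "finite R"
  shows "\<exists>S::nat \<Rightarrow> 'p set. feasible S \<and> serves_all R S rel (pg :: 'q \<Rightarrow> 'p) \<and>
           max_flow R S rel pg = opt_max_flow R rel pg"
proof -
  have "\<exists>L (S::nat \<Rightarrow> 'p set). feasible S \<and> serves_all R S rel pg \<and> max_flow R S rel pg = L"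
    using exists_feasible_schedule[OF assms] by blast
  from LeastI_ex[OF this] show ?thesis
    unfolding opt_max_flow_def by blast
qed

definition coarsen :: "nat \<Rightarrow> (nat \<Rightarrow> 'p set) \<Rightarrow> nat \<Rightarrow> 'p set" where
  "coarsen D S t = (if D dvd t then (\<Union>s\<in>{t - 2 * D..<t - D}. S s) else {})"

lemma feasible_mod_coarsen:
  assumes "feasible S"
  shows "feasible_mod D (coarsen D S)"
  unfolding feasible_mod_def
proof (intro allI conjI impI)
  fix t
  have single: "finite (S s) \<and> card (S s) \<le> 1" for s
    using assms unfolding feasible_def by blast
  then show "finite (coarsen D S t)"
    unfolding coarsen_def by simp
  show "coarsen D S t \<noteq> {} \<Longrightarrow> D dvd t"
    unfolding coarsen_def by (auto split: if_splits)
  have "card (\<Union>s\<in>{t - 2 * D..<t - D}. S s) \<le> (\<Sum>s\<in>{t - 2 * D..<t - D}. card (S s))"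
    by (rule card_UN_le) simp
  also have "\<dots> \<le> (\<Sum>s\<in>{t - 2 * D..<t - D}. 1)"
    using single by (intro sum_mono) blast
  also have "\<dots> \<le> D" by simp
  finally show "card (coarsen D S t) \<le> D"
    unfolding coarsen_def by simp
qed

lemma coarsen_delay:
  assumes "D > 0" "x \<in> S c"
  shows "c + D < D * (c div D + 2) \<and> D * (c div D + 2) \<le> c + 2 * D
           \<and> x \<in> coarsen D S (D * (c div D + 2))"
proof -
  have "c = D * (c div D) + c mod D" "c mod D < D"
    using assms(1) by simp_all
  then have lower: "D * (c div D) \<le> c" and upper: "c < D * (c div D) + D"
    by linarith+
  then have "c \<in> {D * (c div D + 2) - 2 * D..<D * (c div D + 2) - D}"
    by (simp add: algebra_simps)
  then show ?thesis
    using lower upper assms(2) unfolding coarsen_def by (auto simp: algebra_simps)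
qed

lemma flow_coarsen:
  assumes "D > 0" "served S rel pg \<rho>" "rel \<rho> \<le> rel' \<rho>" "rel' \<rho> \<le> rel \<rho> + D"
  shows "served (coarsen D S) rel' pg \<rho> \<and> flow (coarsen D S) rel' pg \<rho> \<le> flow S rel pg \<rho> + 2 * D"
proof -
  define c where "c = completion S rel pg \<rho>"
  define t where "t = D * (c div D + 2)"
  have c: "rel \<rho> < c" "pg \<rho> \<in> S c"
    using completion_served[OF assms(2)] unfolding c_def by auto
  have t: "c + D < t \<and> t \<le> c + 2 * D \<and> pg \<rho> \<in> coarsen D S t"
    unfolding t_def using assms(1) c(2) by (rule coarsen_delay[where S = S and c = c])
  then have "served (coarsen D S) rel' pg \<rho> \<and> completion (coarsen D S) rel' pg \<rho> \<le> t"
    using assms(4) c(1) by (intro completion_le) auto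
  then show ?thesis
    using t assms(3) c(1) unfolding flow_def c_def[symmetric] by linarith
qed

definition distinct_list_of :: "'a set \<Rightarrow> 'a list" where
  "distinct_list_of A = (SOME xs. set xs = A \<and> distinct xs)"

lemma distinct_list_of:
  assumes "finite A"
  shows "set (distinct_list_of A) = A \<and> length (distinct_list_of A) = card A"
proof -
  have "set (distinct_list_of A) = A \<and> distinct (distinct_list_of A)"
    unfolding distinct_list_of_def using finite_distinct_list[OF assms] by (rule someI_ex)
  then show ?thesis using distinct_card by metis
qed

text \<open>Slot \<open>D * m + 1 + i\<close> carries the \<open>i\<close>-th page sent at time \<open>D * m\<close>.\<close>
definition spread :: "nat \<Rightarrow> (nat \<Rightarrow> 'p set) \<Rightarrow> nat \<Rightarrow> 'p set" where
  "spread D S t =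
     (if t = 0 then {}
      else let xs = distinct_list_of (S ((t - 1) div D * D)); i = (t - 1) mod D
           in if i < length xs then {xs ! i} else {})"

lemma feasible_spread: "feasible (spread D S)"
  unfolding feasible_def spread_def by (auto simp: Let_def)

lemma spread_delay:
  assumes "D > 0" "feasible_mod D S" "x \<in> S c"
  shows "\<exists>t. c < t \<and> t \<le> c + D \<and> x \<in> spread D S t"
proof -
  obtain m where m: "c = D * m"
    using assms(2,3) unfolding feasible_mod_def by blast
  define xs where "xs = distinct_list_of (S c)"
  have "set xs = S c" "length xs \<le> D"
    using assms(2) distinct_list_of[of "S c"] unfolding xs_def feasible_mod_def by auto
  then obtain i where i: "i < length xs" "xs ! i = x" "i < D"
    using assms(3) by (metis in_set_conv_nth order_less_le_trans)
  have "(c + i) div D = m" "(c + i) mod D = i"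
    using i(3) unfolding m by simp_all
  then have "x \<in> spread D S (c + i + 1)"
    using i unfolding spread_def xs_def m by (simp add: mult.commute)
  then show ?thesis
    using i(3) by (intro exI[of _ "c + i + 1"]) simp
qed

lemma flow_spread:
  assumes "D > 0" "feasible_mod D S" "served S rel' pg \<rho>" "rel \<rho> \<le> rel' \<rho>" "rel' \<rho> \<le> rel \<rho> + D"
  shows "served (spread D S) rel pg \<rho> \<and> flow (spread D S) rel pg \<rho> \<le> flow S rel' pg \<rho> + 2 * D"
proof -
  define c where "c = completion S rel' pg \<rho>"
  have c: "rel' \<rho> < c" "pg \<rho> \<in> S c"
    using completion_served[OF assms(3)] unfolding c_def by auto
  then obtain t where t: "c < t" "t \<le> c + D" "pg \<rho> \<in> spread D S t"
    using spread_delay[OF assms(1,2)] by blast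
  then have "served (spread D S) rel pg \<rho> \<and> completion (spread D S) rel pg \<rho> \<le> t"
    using assms(4) c(1) by (intro completion_le) auto
  then show ?thesis
    using t(2) c(1) assms(5) unfolding flow_def c_def by auto
qed

theorem lemma2p2:
  fixes R :: "'q set" and rel :: "'q \<Rightarrow> nat" and pg :: "'q \<Rightarrow> 'p"
    and \<epsilon> :: real and D :: nat
  assumes "finite R"
    and "0 < \<epsilon>" and "\<epsilon> \<le> 1"
    and "D > 0" and "real D = \<epsilon> * real (opt_max_flow R rel pg)"
  shows "(\<exists>S'::nat \<Rightarrow> 'p set. feasible_mod D S' \<and> serves_all R S' (shift_rel D rel) pg \<and>
            real (max_flow R S' (shift_rel D rel) pg) \<le> (1 + 2 * \<epsilon>) * real (opt_max_flow R rel pg))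
       \<and> (\<forall>S'::nat \<Rightarrow> 'p set. feasible_mod D S' \<and> serves_all R S' (shift_rel D rel) pg \<longrightarrow>
            (\<exists>S::nat \<Rightarrow> 'p set. feasible S \<and> serves_all R S rel pg \<and>
               (\<forall>\<rho>\<in>R. real (flow S rel pg \<rho>) - real (flow S' (shift_rel D rel) pg \<rho>)
                        \<le> 2 * \<epsilon> * real (opt_max_flow R rel pg))))"
proof -
  define L where "L = opt_max_flow R rel pg"
  define rel' where "rel' = shift_rel D rel"
  have shift: "rel \<rho> \<le> rel' \<rho>" "rel' \<rho> \<le> rel \<rho> + D" for \<rho>
    using shift_rel_bounds[OF assms(4), of rel \<rho>] unfolding rel'_def by simp_all
  have bounds: "(1 + 2 * \<epsilon>) * real L = real (L + 2 * D)" "2 * \<epsilon> * real L = real (2 * D)"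
    using assms(5) unfolding L_def by (simp_all add: algebra_simps)
  obtain S0 :: "nat \<Rightarrow> 'p set" where S0: "feasible S0" "serves_all R S0 rel pg" "max_flow R S0 rel pg = L"
    using exists_optimal_schedule[OF assms(1)] unfolding L_def by blast
  have "served (coarsen D S0) rel' pg \<rho> \<and> flow (coarsen D S0) rel' pg \<rho> \<le> L + 2 * D"
    if "\<rho> \<in> R" for \<rho>
    using flow_coarsen[where rel = rel and rel' = rel' and \<rho> = \<rho>, OF assms(4) _ shift]
      flow_le_max_flow[OF assms(1) that, of S0 rel pg] S0 that
    unfolding serves_all_def by fastforce
  then have "feasible_mod D (coarsen D S0) \<and> serves_all R (coarsen D S0) rel' pg
      \<and> max_flow R (coarsen D S0) rel' pg \<le> L + 2 * D"
    using feasible_mod_coarsen[OF S0(1)] max_flow_le[OF assms(1)] unfolding serves_all_def by blast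
  moreover have "feasible (spread D S') \<and> serves_all R (spread D S') rel pg
      \<and> (\<forall>\<rho>\<in>R. flow (spread D S') rel pg \<rho> \<le> flow S' rel' pg \<rho> + 2 * D)"
    if "feasible_mod D S'" "serves_all R S' rel' pg" for S' :: "nat \<Rightarrow> 'p set"
    using flow_spread[where rel = rel and rel' = rel', OF assms(4) that(1) _ shift]
      feasible_spread that(2)
    unfolding serves_all_def by blast
  ultimately show ?thesis
    unfolding L_def[symmetric] rel'_def[symmetric] bounds by (fastforce simp del: of_nat_add of_nat_mult)
qed

end
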